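(* For all integers $m,n\geq 5$ with $m\neq 6$, $m\neq 8$ and $n\neq 7$, $\chi_i(C_m\Box C_n)\leq 6$.
   Context: For a graph $G$, an incidence is a pair $(v,e)$ with $v\in V(G)$, $e\in E(G)$ and $v$ incident with $e$. Two incidences $(v,e)$ and $(w,f)$ are adjacent if $v=w$, or $e=f$, or the edge $vw$ equals $e$ or $f$. An incidence $k$-coloring of $G$ is a map from the set of incidences of $G$ to a set of $k$ colors such that adjacent incidences receive distinct colors; the incidence chromatic number $\chi_i(G)$ is the least such $k$. $C_n$ denotes the cycle on $n$ vertices and $\Box$ the Cartesian product of graphs: $G\Box H$ has vertex set $V(G)\times V(H)$, with $(u_1,v_1)$ adjacent to $(u_2,v_2)$ iff either $u_1=u_2$ and $v_1v_2\in E(H)$, or $v_1=v_2$ and $u_1u_2\in E(G)$. *)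

theory Defs
  imports Main
begin

text \<open>A simple graph is a pair (V, E) where E is a set of 2-element subsets of V.\<close>
type_synonym 'a graph = "'a set \<times> 'a set set"

definition verts :: "'a graph \<Rightarrow> 'a set" where "verts G = fst G"
definition edges :: "'a graph \<Rightarrow> 'a set set" where "edges G = snd G"

definition incidences :: "'a graph \<Rightarrow> ('a \<times> 'a set) set" where
  "incidences G = {(v, e). e \<in> edges G \<and> v \<in> e \<and> v \<in> verts G}"

definition inc_adjacent :: "('a \<times> 'a set) \<Rightarrow> ('a \<times> 'a set) \<Rightarrow> bool" where
  "inc_adjacent i j \<longleftrightarrow> i \<noteq> j \<and>
     (fst i = fst j \<or> snd i = snd j \<or> {fst i, fst j} = snd i \<or> {fst i, fst j} = snd j)"

definition incidence_coloring :: "'a graph \<Rightarrow> nat \<Rightarrow> (('a \<times> 'a set) \<Rightarrow> nat) \<Rightarrow> bool" where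
  "incidence_coloring G k c \<longleftrightarrow>
     (\<forall>i\<in>incidences G. c i < k) \<and>
     (\<forall>i\<in>incidences G. \<forall>j\<in>incidences G. inc_adjacent i j \<longrightarrow> c i \<noteq> c j)"

definition incidence_chromatic_number :: "'a graph \<Rightarrow> nat" where
  "incidence_chromatic_number G = (LEAST k. \<exists>c. incidence_coloring G k c)"

definition cycle_graph :: "nat \<Rightarrow> nat graph" where
  "cycle_graph n = ({0..<n}, {{i, (i + 1) mod n} | i. i < n})"

definition cart_prod :: "'a graph \<Rightarrow> 'b graph \<Rightarrow> ('a \<times> 'b) graph" where
  "cart_prod G H = (verts G \<times> verts H,
     {{(u, v1), (u, v2)} | u v1 v2. u \<in> verts G \<and> {v1, v2} \<in> edges H} \<union>
     {{(u1, v), (u2, v)} | u1 u2 v. v \<in> verts H \<and> {u1, u2} \<in> edges G})"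

end

theory Submission
  imports Defs
begin

text \<open>
  A fixed 6-colouring of the incidences of a 13 \<times> 12 pattern is pulled back to
  C_m \<box> C_n along a closed walk through its rows and one through its
  columns. Rows 0, \<dots>, 4 form a cycle and the rows 4, 6, 8, 10, 12 may all be followed
  by row 0, so closed row walks exist for every length m = 5k + r with
  r \<in> {5, 7, 9, 11, 13}, i.e. for all m \<ge> 5 except 6 and 8; likewise the columns
  give all n \<ge> 5 except 7. Properness of the pulled-back colouring only involves
  incidences at a vertex and at its four neighbours, and these local constraints are
  checked on the pattern once and for all.
\<close>

datatype direction = East | West | North | South

definition directions :: "direction list" where
  "directions = [East, West, North, South]"

lemma set_directions: "set directions = UNIV"
  unfolding directions_def using direction.exhaust by auto

fun opposite :: "direction \<Rightarrow> direction" where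
  "opposite East = West"
| "opposite West = East"
| "opposite North = South"
| "opposite South = North"

definition cyc_succ :: "nat \<Rightarrow> nat \<Rightarrow> nat" where
  "cyc_succ m i = (if Suc i = m then 0 else Suc i)"

definition cyc_pred :: "nat \<Rightarrow> nat \<Rightarrow> nat" where
  "cyc_pred m i = (if i = 0 then m - 1 else i - 1)"

lemma cyc_succ_lt: "i < m \<Longrightarrow> cyc_succ m i < m"
  by (auto simp: cyc_succ_def)

lemma cyc_pred_lt: "i < m \<Longrightarrow> cyc_pred m i < m"
  by (auto simp: cyc_pred_def)

lemma cyc_succ_pred: "i < m \<Longrightarrow> cyc_succ m (cyc_pred m i) = i"
  by (auto simp: cyc_succ_def cyc_pred_def)

lemma cyc_pred_succ: "i < m \<Longrightarrow> cyc_pred m (cyc_succ m i) = i"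
  by (auto simp: cyc_succ_def cyc_pred_def)

lemma Suc_mod_eq_cyc_succ: "i < m \<Longrightarrow> Suc i mod m = cyc_succ m i"
  by (auto simp: cyc_succ_def)

fun step :: "nat \<Rightarrow> nat \<Rightarrow> direction \<Rightarrow> nat \<times> nat \<Rightarrow> nat \<times> nat" where
  "step m n East (i, j) = (cyc_succ m i, j)"
| "step m n West (i, j) = (cyc_pred m i, j)"
| "step m n North (i, j) = (i, cyc_succ n j)"
| "step m n South (i, j) = (i, cyc_pred n j)"

abbreviation torus :: "nat \<Rightarrow> nat \<Rightarrow> (nat \<times> nat) graph" where
  "torus m n \<equiv> cart_prod (cycle_graph m) (cycle_graph n)"

lemma step_in_grid: "v \<in> {..<m} \<times> {..<n} \<Longrightarrow> step m n d v \<in> {..<m} \<times> {..<n}"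
  by (cases v; cases d) (auto simp: cyc_succ_lt cyc_pred_lt)

lemma step_opposite: "v \<in> {..<m} \<times> {..<n} \<Longrightarrow> step m n (opposite d) (step m n d v) = v"
  by (cases v; cases d) (auto simp: cyc_succ_pred cyc_pred_succ)

lemma step_neq: "2 \<le> m \<Longrightarrow> 2 \<le> n \<Longrightarrow> v \<in> {..<m} \<times> {..<n} \<Longrightarrow> step m n d v \<noteq> v"
  by (cases v; cases d) (auto simp: cyc_succ_def cyc_pred_def)

lemma step_eq_iff:
  "3 \<le> m \<Longrightarrow> 3 \<le> n \<Longrightarrow> v \<in> {..<m} \<times> {..<n} \<Longrightarrow> step m n d v = step m n d' v \<longleftrightarrow> d = d'"
  by (cases v; cases d; cases d') (auto simp: cyc_succ_def cyc_pred_def)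

definition direction_of :: "nat \<Rightarrow> nat \<Rightarrow> nat \<times> nat \<Rightarrow> (nat \<times> nat) set \<Rightarrow> direction" where
  "direction_of m n v e = (THE d. e = {v, step m n d v})"

lemma direction_of_step:
  assumes "3 \<le> m" "3 \<le> n" "v \<in> {..<m} \<times> {..<n}"
  shows "direction_of m n v {v, step m n d v} = d"
  unfolding direction_of_def
proof (rule the_equality)
  fix d' assume "{v, step m n d v} = {v, step m n d' v}"
  moreover have "step m n d v \<noteq> v" "step m n d' v \<noteq> v"
    using step_neq assms by auto
  ultimately have "step m n d' v = step m n d v"
    by (auto simp: doubleton_eq_iff)
  then show "d' = d"
    using step_eq_iff assms by blast
qed simp

lemma edge_of_torus:
  assumes "e \<in> edges (torus m n)"
  obtains v d where "v \<in> {..<m} \<times> {..<n}" "e = {v, step m n d v}"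
proof -
  from assms consider
      (vertical) i j j' where "i < m" "j < n" "e = {(i, j'), (i, j)}" "j' = Suc j mod n"
    | (horizontal) i i' j where "i < m" "j < n" "e = {(i', j), (i, j)}" "i' = Suc i mod m"
    unfolding edges_def cart_prod_def cycle_graph_def verts_def
    by (auto simp: doubleton_eq_iff)
  then show thesis
  proof cases
    case vertical
    then have "e = {(i, j), step m n North (i, j)}"
      by (auto simp: Suc_mod_eq_cyc_succ)
    with vertical that show thesis by blast
  next
    case horizontal
    then have "e = {(i, j), step m n East (i, j)}"
      by (auto simp: Suc_mod_eq_cyc_succ)
    with horizontal that show thesis by blast
  qed
qed

lemma incidence_of_torus:
  assumes "x \<in> incidences (torus m n)"
  obtains v d where "v \<in> {..<m} \<times> {..<n}" "x = (v, {v, step m n d v})"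
proof -
  obtain u e where x: "x = (u, e)" "u \<in> e" "e \<in> edges (torus m n)"
    using assms by (auto simp: incidences_def)
  then obtain v d where v: "v \<in> {..<m} \<times> {..<n}" "e = {v, step m n d v}"
    by (blast elim: edge_of_torus)
  show thesis
  proof (cases "u = v")
    case True
    with x v that show thesis by blast
  next
    case False
    with x v have "u = step m n d v" by auto
    then have "e = {u, step m n (opposite d) u}"
      using v step_opposite by auto
    with x v step_in_grid \<open>u = step m n d v\<close> that show thesis by blast
  qed
qed

lemma inc_adjacent_doubletons:
  "inc_adjacent (v, {v, v'}) (w, {w, w'}) \<Longrightarrow> v = w \<and> v' \<noteq> w' \<or> w = v' \<or> v = w'"
  by (auto simp: inc_adjacent_def doubleton_eq_iff)

definition closed_walk :: "('a \<Rightarrow> 'a \<Rightarrow> bool) \<Rightarrow> nat \<Rightarrow> (nat \<Rightarrow> 'a) \<Rightarrow> bool" where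
  "closed_walk R m \<sigma> \<longleftrightarrow> (\<forall>i<m. R (\<sigma> i) (\<sigma> (cyc_succ m i)))"

definition tile_coloring ::
    "nat \<Rightarrow> nat \<Rightarrow> (direction \<Rightarrow> 'a \<Rightarrow> 'b \<Rightarrow> nat) \<Rightarrow> (nat \<Rightarrow> 'a) \<Rightarrow> (nat \<Rightarrow> 'b)
      \<Rightarrow> (nat \<times> nat) \<times> (nat \<times> nat) set \<Rightarrow> nat" where
  "tile_coloring m n F \<sigma> \<tau> x =
     F (direction_of m n (fst x) (snd x)) (\<sigma> (fst (fst x))) (\<tau> (snd (fst x)))"

text \<open>
  F d a b is the colour of the incidence pointing in direction d at a vertex in row
  state a and column state b; R a a' allows row state a' east of row state a, and
  C b b' allows column state b' north of column state b.
\<close>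
locale incidence_tile =
  fixes A :: "'a set" and B :: "'b set"
    and R :: "'a \<Rightarrow> 'a \<Rightarrow> bool" and C :: "'b \<Rightarrow> 'b \<Rightarrow> bool"
    and F :: "direction \<Rightarrow> 'a \<Rightarrow> 'b \<Rightarrow> nat" and k :: nat
  assumes R_dom: "R a a' \<Longrightarrow> a \<in> A"
    and C_dom: "C b b' \<Longrightarrow> b \<in> B"
    and tile_bounded: "a \<in> A \<Longrightarrow> b \<in> B \<Longrightarrow> F d a b < k"
    and tile_directions: "a \<in> A \<Longrightarrow> b \<in> B \<Longrightarrow> d \<noteq> d' \<Longrightarrow> F d a b \<noteq> F d' a b"
    and tile_east: "R a a' \<Longrightarrow> b \<in> B \<Longrightarrow> F East a b \<noteq> F d a' b"
    and tile_west: "R a a' \<Longrightarrow> b \<in> B \<Longrightarrow> F West a' b \<noteq> F d a b"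
    and tile_north: "C b b' \<Longrightarrow> a \<in> A \<Longrightarrow> F North a b \<noteq> F d a b'"
    and tile_south: "C b b' \<Longrightarrow> a \<in> A \<Longrightarrow> F South a b' \<noteq> F d a b"
begin

lemma tile_neighbour:
  assumes \<sigma>: "closed_walk R m \<sigma>" and \<tau>: "closed_walk C n \<tau>" and v: "v \<in> {..<m} \<times> {..<n}"
    and w: "w = step m n d v"
  shows "F d (\<sigma> (fst v)) (\<tau> (snd v)) \<noteq> F d' (\<sigma> (fst w)) (\<tau> (snd w))"
proof -
  obtain i j where ij: "v = (i, j)" "i < m" "j < n"
    using v by auto
  have R: "R (\<sigma> i) (\<sigma> (cyc_succ m i))" "R (\<sigma> (cyc_pred m i)) (\<sigma> i)"
    using \<sigma> ij cyc_pred_lt[of i m] cyc_succ_pred[of i m] unfolding closed_walk_def by metis+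
  have C: "C (\<tau> j) (\<tau> (cyc_succ n j))" "C (\<tau> (cyc_pred n j)) (\<tau> j)"
    using \<tau> ij cyc_pred_lt[of j n] cyc_succ_pred[of j n] unfolding closed_walk_def by metis+
  show ?thesis
    using w ij R C tile_east tile_west tile_north tile_south C_dom R_dom
    by (cases d) auto
qed

theorem incidence_coloring_torus:
  assumes "3 \<le> m" "3 \<le> n" and \<sigma>: "closed_walk R m \<sigma>" and \<tau>: "closed_walk C n \<tau>"
  shows "incidence_coloring (torus m n) k (tile_coloring m n F \<sigma> \<tau>)"
proof -
  have states: "\<sigma> (fst v) \<in> A" "\<tau> (snd v) \<in> B" if "v \<in> {..<m} \<times> {..<n}" for v
    using that \<sigma> \<tau> R_dom C_dom unfolding closed_walk_def by auto
  have colour: "tile_coloring m n F \<sigma> \<tau> (v, {v, step m n d v}) = F d (\<sigma> (fst v)) (\<tau> (snd v))"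
    if "v \<in> {..<m} \<times> {..<n}" for v d
    using that assms by (simp add: tile_coloring_def direction_of_step)
  show ?thesis
    unfolding incidence_coloring_def
  proof (intro conjI ballI impI)
    fix x assume "x \<in> incidences (torus m n)"
    then show "tile_coloring m n F \<sigma> \<tau> x < k"
      by (elim incidence_of_torus) (simp add: colour states tile_bounded)
  next
    fix x y assume "x \<in> incidences (torus m n)" "y \<in> incidences (torus m n)"
      and adj: "inc_adjacent x y"
    then obtain v d w d' where v: "v \<in> {..<m} \<times> {..<n}" "x = (v, {v, step m n d v})"
      and w: "w \<in> {..<m} \<times> {..<n}" "y = (w, {w, step m n d' w})"
      by (metis incidence_of_torus)
    from adj v w consider "v = w" "d \<noteq> d'" | "w = step m n d v" | "v = step m n d' w"
      by (auto dest: inc_adjacent_doubletons)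
    then show "tile_coloring m n F \<sigma> \<tau> x \<noteq> tile_coloring m n F \<sigma> \<tau> y"
    proof cases
      case 1
      then show ?thesis
        using v w by (simp add: colour states tile_directions)
    next
      case 2
      then show ?thesis
        using v w by (simp add: colour tile_neighbour[OF \<sigma> \<tau>])
    next
      case 3
      then show ?thesis
        using v w by (simp add: colour tile_neighbour[OF \<sigma> \<tau>] not_sym)
    qed
  qed
qed

end

lemma mod_eq_pred_if_dvd_Suc: "0 < p \<Longrightarrow> p dvd Suc i \<Longrightarrow> i mod p = p - 1"
  using mod_Suc[of i p] by (auto simp: dvd_eq_mod_eq_0 split: if_splits)

text \<open>
  Wind round the cycle 0 \<rightarrow> \<dots> \<rightarrow> p - 1 \<rightarrow> 0 for the first m - r steps, then
  run once along the path 0 \<rightarrow> \<dots> \<rightarrow> r - 1 \<rightarrow> 0.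
\<close>
lemma closed_walk_cycle_path:
  fixes R :: "nat \<Rightarrow> nat \<Rightarrow> bool"
  assumes "0 < p" "p \<le> r" "r \<le> m" "m mod p = r mod p"
    and path: "\<And>a. Suc a < r \<Longrightarrow> R a (Suc a)"
    and cycle_back: "R (p - 1) 0" and path_back: "R (r - 1) 0"
  shows "closed_walk R m (\<lambda>i. if i < m - r then i mod p else i - (m - r))"
    (is "closed_walk R m ?\<sigma>")
  unfolding closed_walk_def
proof (intro allI impI)
  fix i assume "i < m"
  define k where "k = m - r"
  have "p dvd k"
    using assms(3,4) mod_eq_dvd_iff_nat[of r m p] by (simp add: k_def)
  have "0 < r" "k < m"
    using assms(1-3) by (auto simp: k_def)
  consider "Suc i < k" | "Suc i = k" | "k \<le> i" "Suc i < m" | "Suc i = m"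
    using \<open>i < m\<close> by linarith
  then show "R (?\<sigma> i) (?\<sigma> (cyc_succ m i))"
  proof cases
    case 1
    then have succ: "cyc_succ m i = Suc i"
      using \<open>k < m\<close> by (simp add: cyc_succ_def)
    show ?thesis
    proof (cases "p dvd Suc i")
      case True
      then have "i mod p = p - 1" "Suc i mod p = 0"
        using \<open>0 < p\<close> mod_eq_pred_if_dvd_Suc by auto
      with 1 succ show ?thesis
        using cycle_back by (simp add: k_def)
    next
      case False
      have "Suc (i mod p) \<noteq> p"
        using False mod_Suc[of i p] by (auto simp: dvd_eq_mod_eq_0)
      moreover have "i mod p < p"
        using \<open>0 < p\<close> by simp
      ultimately have "Suc i mod p = Suc (i mod p)" "Suc (i mod p) < r"
        using \<open>p \<le> r\<close> by (auto simp: mod_Suc)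
      with 1 succ show ?thesis
        using path by (simp add: k_def)
    qed
  next
    case 2
    then have "cyc_succ m i = k" "i mod p = p - 1"
      using \<open>k < m\<close> \<open>p dvd k\<close> \<open>0 < p\<close> mod_eq_pred_if_dvd_Suc by (auto simp: cyc_succ_def)
    with 2 show ?thesis
      using cycle_back by (simp add: k_def)
  next
    case 3
    then have "cyc_succ m i = Suc i" "Suc i - k = Suc (i - k)" "Suc (i - k) < r"
      by (auto simp: cyc_succ_def k_def)
    with 3 show ?thesis
      using path by (simp add: k_def)
  next
    case 4
    then have "cyc_succ m i = 0" "i - k = r - 1" "\<not> i < k"
      using assms(3) \<open>0 < r\<close> by (auto simp: cyc_succ_def k_def)
    then show ?thesis
      using path_back by (simp add: k_def)
  qed
qed

definition row_step :: "nat \<Rightarrow> nat \<Rightarrow> bool" where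
  "row_step a a' \<longleftrightarrow> a < 12 \<and> a' = Suc a \<or> a' = 0 \<and> a \<in> {4, 6, 8, 10, 12}"

definition column_step :: "nat \<Rightarrow> nat \<Rightarrow> bool" where
  "column_step b b' \<longleftrightarrow> b < 11 \<and> b' = Suc b \<or> b' = 0 \<and> b \<in> {4, 5, 7, 8, 11}"

lemma row_walk_exists:
  assumes "5 \<le> m" "m \<noteq> 6" "m \<noteq> 8"
  shows "\<exists>\<sigma>. closed_walk row_step m \<sigma>"
proof -
  have "m mod 5 \<in> {0, 1, 2, 3, 4}"
    by auto
  then have "\<exists>r \<in> {5, 7, 9, 11, 13}. r \<le> m \<and> m mod 5 = r mod 5"
    using assms by (elim insertE) (auto, presburger+)
  then obtain r where "r \<in> {5, 7, 9, 11, 13}" "r \<le> m" "m mod 5 = r mod 5"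
    by blast
  then have "closed_walk row_step m (\<lambda>i. if i < m - r then i mod 5 else i - (m - r))"
    by (intro closed_walk_cycle_path) (auto simp: row_step_def)
  then show ?thesis by blast
qed

lemma column_walk_exists:
  assumes "5 \<le> n" "n \<noteq> 7"
  shows "\<exists>\<tau>. closed_walk column_step n \<tau>"
proof -
  have "n mod 5 \<in> {0, 1, 2, 3, 4}"
    by auto
  then have "\<exists>r \<in> {5, 6, 8, 9, 12}. r \<le> n \<and> n mod 5 = r mod 5"
    using assms by (elim insertE) (auto, presburger+)
  then obtain r where "r \<in> {5, 6, 8, 9, 12}" "r \<le> n" "n mod 5 = r mod 5"
    by blast
  then have "closed_walk column_step n (\<lambda>i. if i < n - r then i mod 5 else i - (n - r))"
    by (intro closed_walk_cycle_path) (auto simp: column_step_def)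
  then show ?thesis by blast
qed

text \<open>Found by computer search.\<close>
fun tile_rows :: "direction \<Rightarrow> nat list list" where
  "tile_rows East =
     [[2, 2, 3, 3, 4, 4, 4, 4, 2, 2, 0, 4],
      [5, 5, 5, 4, 3, 3, 5, 3, 3, 3, 1, 2],
      [1, 3, 0, 5, 5, 2, 1, 5, 1, 4, 0, 5],
      [5, 2, 2, 1, 4, 4, 5, 4, 4, 1, 3, 4],
      [3, 1, 0, 0, 5, 1, 2, 0, 1, 3, 4, 1],
      [0, 5, 5, 4, 2, 0, 4, 3, 4, 5, 1, 2],
      [1, 4, 0, 0, 5, 5, 3, 5, 5, 3, 2, 5],
      [2, 5, 3, 3, 4, 4, 2, 4, 4, 1, 5, 4],
      [1, 1, 4, 0, 5, 5, 3, 0, 5, 3, 2, 1],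
      [4, 5, 5, 1, 2, 2, 4, 2, 4, 5, 1, 0],
      [3, 4, 0, 0, 5, 1, 3, 0, 1, 3, 4, 5],
      [0, 2, 2, 2, 4, 4, 1, 4, 5, 2, 5, 4],
      [1, 1, 4, 5, 2, 1, 2, 0, 1, 1, 4, 1]]"
| "tile_rows West =
     [[0, 5, 2, 1, 3, 0, 1, 3, 4, 0, 3, 0],
      [3, 4, 4, 5, 5, 5, 3, 5, 5, 1, 4, 1],
      [2, 2, 3, 0, 4, 4, 0, 1, 4, 2, 5, 4],
      [0, 5, 1, 4, 1, 0, 4, 3, 0, 5, 1, 3],
      [1, 3, 3, 5, 2, 2, 0, 2, 2, 4, 5, 2],
      [5, 2, 2, 2, 4, 4, 1, 4, 5, 1, 2, 4],
      [3, 1, 1, 3, 1, 1, 5, 0, 1, 4, 4, 1],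
      [0, 3, 2, 4, 3, 0, 4, 2, 2, 0, 1, 2],
      [3, 4, 0, 5, 2, 1, 5, 5, 1, 4, 0, 5],
      [2, 2, 3, 3, 3, 0, 2, 4, 2, 0, 3, 4],
      [1, 1, 4, 2, 4, 5, 5, 5, 5, 4, 2, 1],
      [4, 3, 5, 4, 3, 0, 4, 3, 4, 5, 3, 0],
      [3, 4, 0, 0, 5, 2, 3, 2, 2, 3, 1, 2]]"
| "tile_rows North =
     [[4, 0, 5, 2, 1, 3, 0, 1, 3, 4, 5, 3],
      [1, 3, 0, 1, 2, 0, 1, 2, 0, 5, 3, 0],
      [4, 1, 2, 3, 0, 5, 2, 0, 5, 1, 2, 0],
      [4, 0, 5, 2, 3, 1, 2, 1, 3, 0, 2, 1],
      [2, 4, 1, 3, 0, 5, 3, 5, 0, 2, 0, 5],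
      [4, 0, 3, 5, 3, 2, 0, 2, 3, 0, 5, 3],
      [5, 2, 4, 2, 0, 4, 2, 4, 0, 1, 0, 4],
      [4, 0, 5, 2, 1, 3, 0, 1, 3, 2, 3, 1],
      [5, 3, 1, 4, 0, 2, 4, 2, 0, 5, 4, 2],
      [0, 4, 2, 5, 1, 3, 0, 1, 3, 2, 5, 3],
      [5, 2, 1, 3, 0, 4, 2, 4, 0, 1, 0, 4],
      [5, 0, 1, 5, 1, 3, 0, 1, 3, 4, 2, 3],
      [2, 3, 1, 4, 0, 5, 4, 5, 0, 5, 0, 5]]"
| "tile_rows South =
     [[5, 3, 1, 4, 0, 2, 5, 2, 0, 5, 1, 2],
      [4, 0, 1, 2, 0, 1, 2, 0, 1, 4, 2, 5],
      [3, 0, 4, 1, 2, 1, 3, 4, 2, 0, 3, 1],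
      [2, 1, 4, 3, 0, 5, 3, 0, 5, 2, 4, 0],
      [4, 0, 5, 4, 1, 3, 4, 1, 3, 5, 1, 3],
      [1, 3, 4, 1, 0, 5, 3, 5, 0, 2, 3, 0],
      [2, 0, 3, 5, 4, 3, 0, 1, 3, 2, 5, 3],
      [5, 1, 4, 1, 0, 2, 1, 3, 0, 5, 4, 0],
      [4, 0, 5, 2, 1, 3, 0, 1, 3, 2, 1, 3],
      [5, 3, 1, 4, 0, 4, 1, 3, 0, 1, 4, 2],
      [2, 0, 3, 5, 1, 3, 0, 1, 3, 2, 5, 3],
      [2, 1, 4, 3, 0, 5, 2, 5, 0, 1, 0, 1],
      [4, 0, 5, 3, 1, 3, 0, 1, 3, 4, 2, 3]]"

definition tile :: "direction \<Rightarrow> nat \<Rightarrow> nat \<Rightarrow> nat" where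
  "tile d a b = tile_rows d ! a ! b"

lemma tile_bounded_table:
  "\<forall>a \<in> set [0..<13]. \<forall>b \<in> set [0..<12]. \<forall>d \<in> set directions. tile d a b < 6"
  by code_simp

lemma tile_directions_table:
  "\<forall>a \<in> set [0..<13]. \<forall>b \<in> set [0..<12]. distinct (map (\<lambda>d. tile d a b) directions)"
  by code_simp

lemma tile_east_table:
  "\<forall>a \<in> set [0..<13]. \<forall>a' \<in> set [0..<13]. row_step a a' \<longrightarrow>
     (\<forall>b \<in> set [0..<12]. \<forall>d \<in> set directions. tile East a b \<noteq> tile d a' b)"
  by code_simp

lemma tile_west_table:
  "\<forall>a \<in> set [0..<13]. \<forall>a' \<in> set [0..<13]. row_step a a' \<longrightarrow>
     (\<forall>b \<in> set [0..<12]. \<forall>d \<in> set directions. tile West a' b \<noteq> tile d a b)"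
  by code_simp

lemma tile_north_table:
  "\<forall>b \<in> set [0..<12]. \<forall>b' \<in> set [0..<12]. column_step b b' \<longrightarrow>
     (\<forall>a \<in> set [0..<13]. \<forall>d \<in> set directions. tile North a b \<noteq> tile d a b')"
  by code_simp

lemma tile_south_table:
  "\<forall>b \<in> set [0..<12]. \<forall>b' \<in> set [0..<12]. column_step b b' \<longrightarrow>
     (\<forall>a \<in> set [0..<13]. \<forall>d \<in> set directions. tile South a b' \<noteq> tile d a b)"
  by code_simp

lemma row_step_lt: "row_step a a' \<Longrightarrow> a < 13 \<and> a' < 13"
  by (auto simp: row_step_def)

lemma column_step_lt: "column_step b b' \<Longrightarrow> b < 12 \<and> b' < 12"
  by (auto simp: column_step_def)

interpretation six_tile: incidence_tile "{..<13}" "{..<12}" row_step column_step tile 6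
proof
  fix a a' b b' :: nat and d d' :: direction
  note bounds = set_upt atLeastLessThan_iff lessThan_iff set_directions
  show "row_step a a' \<Longrightarrow> a \<in> {..<13}" "column_step b b' \<Longrightarrow> b \<in> {..<12}"
    using row_step_lt column_step_lt by auto
  show "a \<in> {..<13} \<Longrightarrow> b \<in> {..<12} \<Longrightarrow> tile d a b < 6"
    using tile_bounded_table unfolding bounds by auto
  show "a \<in> {..<13} \<Longrightarrow> b \<in> {..<12} \<Longrightarrow> d \<noteq> d' \<Longrightarrow> tile d a b \<noteq> tile d' a b"
    using tile_directions_table unfolding bounds distinct_map inj_on_def by auto
  show "row_step a a' \<Longrightarrow> b \<in> {..<12} \<Longrightarrow> tile East a b \<noteq> tile d a' b"
    using tile_east_table row_step_lt[of a a'] unfolding bounds by auto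
  show "row_step a a' \<Longrightarrow> b \<in> {..<12} \<Longrightarrow> tile West a' b \<noteq> tile d a b"
    using tile_west_table row_step_lt[of a a'] unfolding bounds by auto
  show "column_step b b' \<Longrightarrow> a \<in> {..<13} \<Longrightarrow> tile North a b \<noteq> tile d a b'"
    using tile_north_table column_step_lt[of b b'] unfolding bounds by auto
  show "column_step b b' \<Longrightarrow> a \<in> {..<13} \<Longrightarrow> tile South a b' \<noteq> tile d a b"
    using tile_south_table column_step_lt[of b b'] unfolding bounds by auto
qed

theorem lemma3:
  fixes m n :: nat
  assumes "m \<ge> 5" and "n \<ge> 5" and "m \<noteq> 6" and "m \<noteq> 8" and "n \<noteq> 7"
  shows "incidence_chromatic_number (cart_prod (cycle_graph m) (cycle_graph n)) \<le> 6"
proof -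
  obtain \<sigma> where "closed_walk row_step m \<sigma>"
    using row_walk_exists assms by blast
  moreover obtain \<tau> where "closed_walk column_step n \<tau>"
    using column_walk_exists assms by blast
  ultimately have "incidence_coloring (torus m n) 6 (tile_coloring m n tile \<sigma> \<tau>)"
    using assms by (intro six_tile.incidence_coloring_torus) auto
  then show ?thesis
    unfolding incidence_chromatic_number_def by (blast intro: Least_le)
qed

end
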